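(* For all $a,b>0$, $H(a,b)\le\lambda_s(a,b)\le G(a,b)$ whenever $-3\le s\le -1$. These bounds are best possible: the inequality $H(a,b)\le \lambda_s(a,b)$ holds for all $a,b>0$ if and only if $s\ge -3$, and the inequality $\lambda_s(a,b)\le G(a,b)$ holds for all $a,b>0$ if and only if $s\le -1$.
   Context: For $a,b>0$ with $a\neq b$ define $$\lambda_s(a,b)=\begin{cases}\dfrac{s-1}{s+1}\cdot\dfrac{a^{s+1}+b^{s+1}-2\left(\frac{a+b}{2}\right)^{s+1}}{a^s+b^s-2\left(\frac{a+b}{2}\right)^s}, & s\in\mathbb{R}\setminus\{-1,0,1\},\\[3mm] \dfrac{2\log\frac{a+b}{2}-\log a-\log b}{\frac{1}{2a}+\frac{1}{2b}-\frac{2}{a+b}}, & s=-1,\\[3mm] \dfrac{a\log a+b\log b-(a+b)\log\frac{a+b}{2}}{2\log\frac{a+b}{2}-\log a-\log b}, & s=0,\\[3mm] \dfrac{(b-a)^2}{4\left(a\log a+b\log b-(a+b)\log\frac{a+b}{2}\right)}, & s=1,\end{cases}$$ and $\lambda_s(a,a)=a$. The harmonic and geometric means are $H(a,b)=2(1/a+1/b)^{-1}$ and $G(a,b)=\sqrt{ab}$. *)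

theory Defs
  imports Complex_Main
begin

definition harm_mean :: "real \<Rightarrow> real \<Rightarrow> real" where
  "harm_mean a b = 2 / (1 / a + 1 / b)"

definition geom_mean :: "real \<Rightarrow> real \<Rightarrow> real" where
  "geom_mean a b = sqrt (a * b)"

definition lam :: "real \<Rightarrow> real \<Rightarrow> real \<Rightarrow> real" where
  "lam s a b =
    (if a = b then a
     else if s = -1 then
       (2 * ln ((a + b) / 2) - ln a - ln b) / (1 / (2 * a) + 1 / (2 * b) - 2 / (a + b))
     else if s = 0 then
       (a * ln a + b * ln b - (a + b) * ln ((a + b) / 2)) / (2 * ln ((a + b) / 2) - ln a - ln b)
     else if s = 1 then
       (b - a)^2 / (4 * (a * ln a + b * ln b - (a + b) * ln ((a + b) / 2)))
     else
       (s - 1) / (s + 1) *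
       ((a powr (s + 1) + b powr (s + 1) - 2 * ((a + b) / 2) powr (s + 1)) /
        (a powr s + b powr s - 2 * ((a + b) / 2) powr s)))"

end

theory Submission
  imports Defs "HOL-Analysis.Analysis" "HOL-Real_Asymp.Real_Asymp"
begin

(* For 0 < a < b let w(t) = min (t - a) (b - t) be the tent function on [a, b]
   and M p = \<integral>_a^b t^p w(t) dt.  Since f a + f b - 2 f ((a+b)/2) = \<integral>_a^b f'' w, the mean is a
   ratio of tent moments:  lam s a b = M (s-1) / M (s-2)  with  M (s-2) > 0.  Hence the sign of
   lam s a b - c is that of the defect  D p c = M (p+1) - c M p  at p = s - 2.
   The factorisation
       t^(q+r+1) - c t^(q+r) - c^q (t^(r+1) - c t^r) = t^r (t - c) (t^q - c^q)
   shows that D (q+r) c - c^q D r c is the tent integral of a function whose sign is that of q.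
   With c = H and q = s + 3 \<ge> 0 this reduces H \<le> lam s to s = -3, where D (-5) H is an explicit
   fourth power; with c = G and q = s + 1 \<le> 0 it reduces lam s \<le> G to s = -1, which is the
   elementary inequality 2 ln u \<le> u - 1/u.
   Sharpness: for s < -3, lam s 1 b tends to (s-1)/(s+1) < 2 = lim H 1 b as b \<rightarrow> \<infinity>.  For
   s > -1, a mean value bound makes D (s-2) G - G^(s+1) D (-3) G at least a fixed multiple of
   \<integral> (t - G)^2 w, which for b \<rightarrow> 1 dominates the defect of the case s = -1 (real_asymp). *)

section \<open>Tent moments\<close>

lemma has_integral_tent_second_difference:
  fixes a b :: real and f g h :: "real \<Rightarrow> real"
  assumes ab: "a < b"
    and f': "\<And>t. a \<le> t \<Longrightarrow> t \<le> b \<Longrightarrow> (f has_real_derivative g t) (at t)"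
    and g': "\<And>t. a \<le> t \<Longrightarrow> t \<le> b \<Longrightarrow> (g has_real_derivative h t) (at t)"
  shows "((\<lambda>t. h t * min (t-a) (b-t)) has_integral (f a + f b - 2 * f ((a+b)/2))) {a..b}"
proof -
  define m where "m = (a+b)/2"
  have am: "a \<le> m" "m \<le> b" using ab by (auto simp: m_def)
  have left: "((\<lambda>t. h t * (t-a)) has_integral ((g m * (m-a) - f m) - (g a * (a-a) - f a))) {a..m}"
  proof (rule fundamental_theorem_of_calculus[OF am(1)])
    fix t assume t: "t \<in> {a..m}"
    have "((\<lambda>t. g t * (t-a) - f t) has_real_derivative (h t * (t-a) + g t * 1 - g t)) (at t)"
      using t am f'[of t] g'[of t] by (auto intro!: derivative_eq_intros)
    then show "((\<lambda>t. g t * (t-a) - f t) has_vector_derivative h t * (t-a)) (at t within {a..m})"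
      by (simp add: has_real_derivative_iff_has_vector_derivative[symmetric] has_field_derivative_at_within)
  qed
  have right: "((\<lambda>t. h t * (b-t)) has_integral ((g b * (b-b) + f b) - (g m * (b-m) + f m))) {m..b}"
  proof (rule fundamental_theorem_of_calculus[OF am(2)])
    fix t assume t: "t \<in> {m..b}"
    have "((\<lambda>t. g t * (b-t) + f t) has_real_derivative (h t * (b-t) + g t * (0-1) + g t)) (at t)"
      using t am f'[of t] g'[of t] by (auto intro!: derivative_eq_intros)
    then show "((\<lambda>t. g t * (b-t) + f t) has_vector_derivative h t * (b-t)) (at t within {m..b})"
      by (simp add: has_real_derivative_iff_has_vector_derivative[symmetric] has_field_derivative_at_within)
  qed
  have "((\<lambda>t. h t * min (t-a) (b-t)) has_integral
          ((g m * (m-a) - f m) - (g a * (a-a) - f a)) + ((g b * (b-b) + f b) - (g m * (b-m) + f m))) {a..b}"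
  proof (rule has_integral_combine[OF am])
    show "((\<lambda>t. h t * min (t-a) (b-t)) has_integral ((g m * (m-a) - f m) - (g a * (a-a) - f a))) {a..m}"
      by (rule has_integral_eq[OF _ left]) (auto simp: m_def min_def)
    show "((\<lambda>t. h t * min (t-a) (b-t)) has_integral ((g b * (b-b) + f b) - (g m * (b-m) + f m))) {m..b}"
      by (rule has_integral_eq[OF _ right]) (auto simp: m_def min_def)
  qed
  moreover have "((g m * (m-a) - f m) - (g a * (a-a) - f a)) + ((g b * (b-b) + f b) - (g m * (b-m) + f m))
                 = f a + f b - 2 * f m"
    by (simp add: m_def algebra_simps) (simp add: field_simps)
  ultimately show ?thesis unfolding m_def[symmetric] by metis
qed

lemma tent_integral_le:
  fixes f g :: "real \<Rightarrow> real"
  assumes "((\<lambda>t. f t * min (t-a) (b-t)) has_integral I) {a..b}"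
    and "((\<lambda>t. g t * min (t-a) (b-t)) has_integral J) {a..b}"
    and "\<And>t. a \<le> t \<Longrightarrow> t \<le> b \<Longrightarrow> f t \<le> g t"
  shows "I \<le> J"
  by (rule has_integral_le[OF assms(1,2)]) (auto intro: mult_right_mono assms(3))

text \<open>The tent moment \<integral>_a^b t^p min (t-a) (b-t) dt in closed form: a second difference of the
  second antiderivative of t^p, which involves logarithms for p = -1 and p = -2.\<close>
definition tent_moment :: "real \<Rightarrow> real \<Rightarrow> real \<Rightarrow> real" where
  "tent_moment p a b =
    (if p = -1 then a * ln a + b * ln b - (a+b) * ln ((a+b)/2)
     else if p = -2 then 2 * ln ((a+b)/2) - ln a - ln b
     else (a powr (p+2) + b powr (p+2) - 2 * ((a+b)/2) powr (p+2)) / ((p+2) * (p+1)))"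

lemma has_integral_tent_moment:
  assumes a: "0 < a" and ab: "a < b"
  shows "((\<lambda>t. t powr p * min (t-a) (b-t)) has_integral tent_moment p a b) {a..b}"
proof -
  consider "p = -1" | "p = -2" | "p \<noteq> -1" "p \<noteq> -2" by blast
  then show ?thesis
  proof cases
    case 1
    have "((\<lambda>t. t powr p * min (t-a) (b-t)) has_integral
           ((a * ln a - a) + (b * ln b - b) - 2 * (((a+b)/2) * ln ((a+b)/2) - (a+b)/2))) {a..b}"
    proof (rule has_integral_tent_second_difference[OF ab, where f="\<lambda>t. t * ln t - t" and g=ln])
      fix t assume "a \<le> t"
      then have t0: "0 < t" using a by simp
      show "((\<lambda>t. t * ln t - t) has_real_derivative ln t) (at t)"
        using t0 by (auto intro!: derivative_eq_intros)
      show "(ln has_real_derivative t powr p) (at t)"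
        using t0 1 by (auto intro!: derivative_eq_intros simp: powr_minus divide_simps)
    qed
    moreover have "(a * ln a - a) + (b * ln b - b) - 2 * (((a+b)/2) * ln ((a+b)/2) - (a+b)/2)
                   = tent_moment p a b"
      using 1 by (simp add: tent_moment_def field_simps)
    ultimately show ?thesis by (simp only:)
  next
    case 2
    have "((\<lambda>t. t powr p * min (t-a) (b-t)) has_integral ((- ln a) + (- ln b) - 2 * (- ln ((a+b)/2)))) {a..b}"
    proof (rule has_integral_tent_second_difference[OF ab, where f="\<lambda>t. - ln t" and g="\<lambda>t. - 1/t"])
      fix t assume "a \<le> t"
      then have t0: "0 < t" using a by simp
      show "((\<lambda>t. - ln t) has_real_derivative - 1/t) (at t)"
        using t0 by (auto intro!: derivative_eq_intros)
      show "((\<lambda>t. - 1/t) has_real_derivative t powr p) (at t)"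
        using t0 2 by (auto intro!: derivative_eq_intros simp: powr_minus divide_simps power2_eq_square)
    qed
    then show ?thesis using 2 by (simp add: tent_moment_def algebra_simps)
  next
    case 3
    have p: "p + 1 \<noteq> 0" "p + 2 \<noteq> 0" using 3 by auto
    have "((\<lambda>t. t powr p * min (t-a) (b-t)) has_integral
           (a powr (p+2) / ((p+2)*(p+1)) + b powr (p+2) / ((p+2)*(p+1))
            - 2 * (((a+b)/2) powr (p+2) / ((p+2)*(p+1))))) {a..b}"
    proof (rule has_integral_tent_second_difference[OF ab,
             where f="\<lambda>t. t powr (p+2) / ((p+2)*(p+1))" and g="\<lambda>t. t powr (p+1) / (p+1)"])
      fix t assume "a \<le> t"
      then have t0: "0 < t" using a by simp
      have "((\<lambda>t. t powr (p+2)) has_real_derivative (p+2) * t powr (p+1)) (at t)"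
        using has_real_derivative_powr[OF t0, of "p+2"] by (simp add: add.commute)
      from DERIV_cdivide[OF this, of "(p+2)*(p+1)"]
      show "((\<lambda>t. t powr (p+2) / ((p+2)*(p+1))) has_real_derivative t powr (p+1) / (p+1)) (at t)"
        using p by simp
      have "((\<lambda>t. t powr (p+1)) has_real_derivative (p+1) * t powr p) (at t)"
        using has_real_derivative_powr[OF t0, of "p+1"] by simp
      from DERIV_cdivide[OF this, of "p+1"]
      show "((\<lambda>t. t powr (p+1) / (p+1)) has_real_derivative t powr p) (at t)"
        using p by simp
    qed
    then show ?thesis using 3 by (simp add: tent_moment_def diff_divide_distrib add_divide_distrib)
  qed
qed

text \<open>Tent moments are positive: t^p is bounded below on [a, b] by min (a^p) (b^p) > 0, and the
  tent function itself has integral (b - a)^2 / 4.\<close>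
lemma tent_moment_pos:
  assumes a: "0 < a" and ab: "a < b"
  shows "0 < tent_moment p a b"
proof -
  define c where "c = min (a powr p) (b powr p)"
  have c0: "0 < c" using a ab by (simp add: c_def)
  have "((\<lambda>t. c * min (t-a) (b-t)) has_integral (c*a^2/2 + c*b^2/2 - 2 * (c*((a+b)/2)^2/2))) {a..b}"
  proof (rule has_integral_tent_second_difference[OF ab, where f="\<lambda>t. c*t^2/2" and g="\<lambda>t. c*t"])
    fix t
    show "((\<lambda>t. c*t^2/2) has_real_derivative c*t) (at t)" by (auto intro!: derivative_eq_intros)
    show "((\<lambda>t. c*t) has_real_derivative c) (at t)" by (auto intro!: derivative_eq_intros)
  qed
  then have "c*a^2/2 + c*b^2/2 - 2 * (c*((a+b)/2)^2/2) \<le> tent_moment p a b"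
  proof (rule tent_integral_le[OF _ has_integral_tent_moment[OF a ab]])
    fix t assume t: "a \<le> t" "t \<le> b"
    show "c \<le> t powr p"
    proof (cases "p \<ge> 0")
      case True
      then have "a powr p \<le> t powr p" using t a by (intro powr_mono2) auto
      then show ?thesis by (simp add: c_def)
    next
      case False
      then have "b powr p \<le> t powr p" using t a by (intro powr_mono2') auto
      then show ?thesis by (simp add: c_def)
    qed
  qed
  moreover have "c*a^2/2 + c*b^2/2 - 2 * (c*((a+b)/2)^2/2) = c * (b-a)^2/4"
    by (simp add: power2_eq_square field_simps)
  moreover have "0 < c * (b-a)^2/4" using c0 ab by simp
  ultimately show ?thesis by linarith
qed

lemma lam_eq_tent_moment_ratio:
  assumes a: "0 < a" and ab: "a < b"
  shows "lam s a b = tent_moment (s-1) a b / tent_moment (s-2) a b"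
proof -
  have ne: "a \<noteq> b" and b: "0 < b" and m: "0 < (a+b)/2" using a ab by auto
  consider "s = -1" | "s = 0" | "s = 1" | "s \<noteq> -1" "s \<noteq> 0" "s \<noteq> 1" by blast
  then show ?thesis
  proof cases
    case 1
    then show ?thesis using a b m ne by (simp add: lam_def tent_moment_def powr_minus field_simps)
  next
    case 2
    then show ?thesis using ne by (simp add: lam_def tent_moment_def)
  next
    case 3
    define L where "L = a * ln a + b * ln b - (a+b) * ln ((a+b)/2)"
    have "tent_moment (s-1) a b = (b-a)^2/4"
      using 3 a b m by (simp add: tent_moment_def power2_eq_square field_simps)
    moreover have "tent_moment (s-2) a b = L" using 3 by (simp add: tent_moment_def L_def)
    moreover have "lam s a b = (b-a)^2 / (4*L)" using 3 ne by (simp add: lam_def L_def)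
    ultimately show ?thesis by (metis divide_divide_eq_left)
  next
    case 4
    have e: "s - 1 + 2 = s + 1" "s - 1 + 1 = s" "s - 2 + 2 = s" "s - 2 + 1 = s - 1" by auto
    have ratio: "(s - 1) / (s + 1) * (u / v) = (u / ((s + 1) * s)) / (v / (s * (s - 1)))"
      for u v :: real
    proof -
      have "(u / ((s + 1) * s)) / (v / (s * (s - 1))) = (s * ((s - 1) * u)) / (s * ((s + 1) * v))"
        by (simp add: ac_simps)
      also have "\<dots> = ((s - 1) * u) / ((s + 1) * v)" using 4 by simp
      finally show ?thesis by simp
    qed
    show ?thesis using 4 ne by (simp add: lam_def tent_moment_def e ratio)
  qed
qed

section \<open>The defect and its comparison principle\<close>

definition tent_defect :: "real \<Rightarrow> real \<Rightarrow> real \<Rightarrow> real \<Rightarrow> real" where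
  "tent_defect p c a b = tent_moment (p+1) a b - c * tent_moment p a b"

lemma has_integral_tent_defect:
  assumes "0 < a" "a < b"
  shows "((\<lambda>t. (t powr (p+1) - c * t powr p) * min (t-a) (b-t)) has_integral tent_defect p c a b) {a..b}"
proof -
  have "((\<lambda>t. t powr (p+1) * min (t-a) (b-t) - c * (t powr p * min (t-a) (b-t)))
         has_integral tent_defect p c a b) {a..b}"
    unfolding tent_defect_def
    by (intro has_integral_diff has_integral_mult_right has_integral_tent_moment assms)
  then show ?thesis by (rule has_integral_eq[rotated]) (simp add: algebra_simps)
qed

lemma less_lam_iff_tent_defect:
  assumes "0 < a" "a < b"
  shows "c < lam s a b \<longleftrightarrow> 0 < tent_defect (s-2) c a b"
  using tent_moment_pos[OF assms, of "s-2"]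
  by (simp add: lam_eq_tent_moment_ratio[OF assms] tent_defect_def pos_less_divide_eq)

lemma le_lam_iff_tent_defect:
  assumes "0 < a" "a < b"
  shows "c \<le> lam s a b \<longleftrightarrow> 0 \<le> tent_defect (s-2) c a b"
  using tent_moment_pos[OF assms, of "s-2"]
  by (simp add: lam_eq_tent_moment_ratio[OF assms] tent_defect_def pos_le_divide_eq)

text \<open>Shifting the exponent by q changes the kernel t^(p+1) - c t^p by a term of the sign of q.\<close>
lemma kernel_factorisation:
  fixes t c q r :: real
  assumes "0 < t"
  shows "t powr (q+r+1) - c * t powr (q+r) - c powr q * (t powr (r+1) - c * t powr r)
         = t powr r * ((t - c) * (t powr q - c powr q))"
  using assms by (simp add: powr_add algebra_simps)

lemma powr_difference_sign:
  fixes t c q :: real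
  assumes t: "0 < t" and c: "0 < c"
  shows "0 \<le> q \<Longrightarrow> 0 \<le> (t - c) * (t powr q - c powr q)"
    and "q \<le> 0 \<Longrightarrow> (t - c) * (t powr q - c powr q) \<le> 0"
proof -
  assume q: "0 \<le> q"
  show "0 \<le> (t - c) * (t powr q - c powr q)"
  proof (cases "c \<le> t")
    case True then show ?thesis using q c by (intro mult_nonneg_nonneg) (auto intro: powr_mono2)
  next
    case False then show ?thesis using q t by (intro mult_nonpos_nonpos) (auto intro: powr_mono2)
  qed
next
  assume q: "q \<le> 0"
  show "(t - c) * (t powr q - c powr q) \<le> 0"
  proof (cases "c \<le> t")
    case True then show ?thesis using q c by (intro mult_nonneg_nonpos) (auto intro: powr_mono2')
  next
    case False then show ?thesis using q t by (intro mult_nonpos_nonneg) (auto intro: powr_mono2')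
  qed
qed

lemma has_integral_tent_defect_shift:
  assumes a: "0 < a" and ab: "a < b"
  shows "((\<lambda>t. t powr r * ((t - c) * (t powr q - c powr q)) * min (t-a) (b-t)) has_integral
          (tent_defect (q+r) c a b - c powr q * tent_defect r c a b)) {a..b}"
proof -
  have "((\<lambda>t. (t powr (q+r+1) - c * t powr (q+r)) * min (t-a) (b-t)
              - c powr q * ((t powr (r+1) - c * t powr r) * min (t-a) (b-t)))
         has_integral (tent_defect (q+r) c a b - c powr q * tent_defect r c a b)) {a..b}"
    by (intro has_integral_diff has_integral_mult_right has_integral_tent_defect a ab)
  then show ?thesis
  proof (rule has_integral_eq[rotated])
    fix t assume "t \<in> {a..b}"
    then have "0 < t" using a by simp
    have "(t powr (q+r+1) - c * t powr (q+r)) * min (t-a) (b-t)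
            - c powr q * ((t powr (r+1) - c * t powr r) * min (t-a) (b-t))
          = (t powr (q+r+1) - c * t powr (q+r) - c powr q * (t powr (r+1) - c * t powr r))
            * min (t-a) (b-t)"
      by (simp only: left_diff_distrib mult.assoc)
    also have "\<dots> = t powr r * ((t - c) * (t powr q - c powr q)) * min (t-a) (b-t)"
      by (simp only: kernel_factorisation[OF \<open>0 < t\<close>])
    finally show "(t powr (q+r+1) - c * t powr (q+r)) * min (t-a) (b-t)
        - c powr q * ((t powr (r+1) - c * t powr r) * min (t-a) (b-t))
        = t powr r * ((t - c) * (t powr q - c powr q)) * min (t-a) (b-t)" .
  qed
qed

lemma tent_defect_shift_nonneg:
  assumes "0 < a" "a < b" "0 < c" "0 \<le> q"
  shows "c powr q * tent_defect r c a b \<le> tent_defect (q+r) c a b"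
proof -
  have "0 \<le> tent_defect (q+r) c a b - c powr q * tent_defect r c a b"
  proof (rule has_integral_nonneg[OF has_integral_tent_defect_shift[OF assms(1,2)]])
    fix t assume "t \<in> {a..b}"
    then have "0 < t" "0 \<le> min (t-a) (b-t)" using assms by auto
    then show "0 \<le> t powr r * ((t - c) * (t powr q - c powr q)) * min (t-a) (b-t)"
      using powr_difference_sign(1)[of t c q] assms by simp
  qed
  then show ?thesis by simp
qed

lemma tent_defect_shift_nonpos:
  assumes "0 < a" "a < b" "0 < c" "q \<le> 0"
  shows "tent_defect (q+r) c a b \<le> c powr q * tent_defect r c a b"
proof -
  have "tent_defect (q+r) c a b - c powr q * tent_defect r c a b \<le> 0"
  proof (rule has_integral_le[OF has_integral_tent_defect_shift[OF assms(1,2)] has_integral_0])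
    fix t assume "t \<in> {a..b}"
    then have "0 < t" "0 \<le> min (t-a) (b-t)" using assms by auto
    then show "t powr r * ((t - c) * (t powr q - c powr q)) * min (t-a) (b-t) \<le> 0"
      using powr_difference_sign(2)[of t c q] assms
      by (simp add: mult_nonneg_nonpos mult_nonpos_nonneg)
  qed
  then show ?thesis by simp
qed

section \<open>The extremal exponents s = -3 and s = -1\<close>

lemma powr_neg_numeral: "0 < x \<Longrightarrow> x powr (- numeral n) = 1 / x ^ numeral n"
  for x :: real by (simp add: powr_minus divide_inverse)

lemma harm_mean_defect_identity:
  fixes a b :: real
  assumes a: "0 < a" and b: "0 < b"
  shows "(1/a^2 + 1/b^2 - 2/((a+b)/2)^2)/6 - 2 / (1/a + 1/b) * ((1/a^3 + 1/b^3 - 2/((a+b)/2)^3)/12)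
         = (b-a)^4 / (6*a*b*(a+b)^4)"
proof -
  have ab: "a + b > 0" using a b by simp
  define D where "D = 6*a^2*b^2*(a+b)^4"
  have h: "2 / (1/a + 1/b) = 2*a*b/(a+b)" using a b by (simp add: field_simps)
  have e1: "(1/a^2 + 1/b^2 - 2/((a+b)/2)^2)/6 = ((a+b)^2*((a+b)^2*(a^2+b^2) - 8*a^2*b^2))/D"
    using a b ab by (simp add: field_simps D_def)
  have e2: "(1/a^3 + 1/b^3 - 2/((a+b)/2)^3) = ((a+b)^3*(a^3+b^3) - 16*a^3*b^3)/(a^3*b^3*(a+b)^3)"
    using a b ab by (simp add: field_simps)
  have e3: "2*a*b/(a+b) * (p/(a^3*b^3*(a+b)^3)/12) = p/D" for p
  proof -
    have "(a+b)*(a^3*b^3*(a+b)^3)*12 = a*b*2*D" unfolding D_def by algebra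
    then have "2*a*b/(a+b) * (p/(a^3*b^3*(a+b)^3)/12) = (a*b*2*p)/(a*b*2*D)"
      by (simp add: divide_simps ac_simps)
    also have "\<dots> = p/D" using a b by simp
    finally show ?thesis .
  qed
  have e4: "(b-a)^4 / (6*a*b*(a+b)^4) = (a*b*(b-a)^4) / D"
    using a b ab by (simp add: field_simps D_def power2_eq_square)
  have "(a+b)^2*((a+b)^2*(a^2+b^2) - 8*a^2*b^2) - ((a+b)^3*(a^3+b^3) - 16*a^3*b^3) = a*b*(b-a)^4"
    by algebra
  then show ?thesis unfolding h e1 e2 e3 e4 by (simp add: diff_divide_distrib[symmetric])
qed

lemma tent_defect_harm_mean_base:
  assumes a: "0 < a" and b: "0 < b"
  shows "tent_defect (-5) (harm_mean a b) a b = (b-a)^4 / (6*a*b*(a+b)^4)"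
proof -
  have m: "0 < (a+b)/2" using a b by simp
  have "tent_moment (-4) a b = (1/a^2 + 1/b^2 - 2/((a+b)/2)^2)/6"
    using a b m by (simp add: tent_moment_def powr_neg_numeral)
  moreover have "tent_moment (-5) a b = (1/a^3 + 1/b^3 - 2/((a+b)/2)^3)/12"
    using a b m by (simp add: tent_moment_def powr_neg_numeral)
  moreover have "tent_defect (-5) c a b = tent_moment (-4) a b - c * tent_moment (-5) a b" for c
    by (simp add: tent_defect_def)
  ultimately show ?thesis
    unfolding harm_mean_def by (simp only: harm_mean_defect_identity[OF a b])
qed

text \<open>The scalar inequality behind the case s = -1: u - 1/u - 2 ln u is increasing.\<close>
lemma two_ln_le_diff_inverse:
  fixes u :: real
  assumes u: "1 \<le> u"
  shows "2 * ln u \<le> u - 1/u"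
proof -
  define g where "g = (\<lambda>x::real. x - 1/x - 2 * ln x)"
  have "g 1 \<le> g u"
  proof (rule deriv_nonneg_imp_mono[OF _ _ u])
    fix x :: real assume "x \<in> {1..u}"
    then have x0: "0 < x" by simp
    show "(g has_real_derivative (1 - 1/x)^2) (at x)"
      unfolding g_def using x0
      by (auto intro!: derivative_eq_intros simp: power2_eq_square field_simps)
    show "0 \<le> (1 - 1/x)^2" by simp
  qed
  then show ?thesis by (simp add: g_def)
qed

text \<open>At s = -1 the defect of the geometric mean is 2 ln u - (u - 1/u) \<le> 0 for u = A/G.\<close>
lemma tent_defect_geom_mean_base:
  assumes a: "0 < a" and b: "0 < b"
  shows "tent_defect (-3) (geom_mean a b) a b \<le> 0"
proof -
  define G where "G = sqrt (a*b)"
  define m where "m = (a+b)/2"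
  have G0: "0 < G" using a b by (simp add: G_def)
  have m0: "0 < m" using a b by (simp add: m_def)
  have GG: "G * G = a * b" using a b by (simp add: G_def)
  define u where "u = m / G"
  have u1: "1 \<le> u"
    using arith_geo_mean_sqrt[of a b] a b G0 by (simp add: u_def G_def m_def)
  have "tent_moment (-2) a b = 2 * ln u"
    using a b G0 m0 by (simp add: tent_moment_def u_def m_def ln_div G_def ln_sqrt ln_mult field_simps)
  moreover have "geom_mean a b * tent_moment (-3) a b = u - 1/u"
  proof -
    have "geom_mean a b * tent_moment (-3) a b = G * (a+b)/(2*(a*b)) - G/m"
      using a b m0 by (simp add: tent_moment_def geom_mean_def G_def m_def powr_minus field_simps)
    also have "\<dots> = G*m/(G*G) - G/m" by (simp add: GG m_def)
    also have "\<dots> = u - 1/u" using G0 m0 by (simp add: u_def field_simps)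
    finally show ?thesis .
  qed
  ultimately show ?thesis using two_ln_le_diff_inverse[OF u1] by (simp add: tent_defect_def)
qed

section \<open>The inequalities H \<le> lam s for s \<ge> -3 and lam s \<le> G for s \<le> -1\<close>

lemma lam_sym: "lam s a b = lam s b a"
  by (simp add: lam_def power2_commute algebra_simps)

text \<open>Reduction to s = -3 for c = H and to s = -1 for c = G via the comparison principle.\<close>
lemma harm_mean_le_lam_ordered:
  assumes a: "0 < a" and ab: "a < b" and s: "-3 \<le> s"
  shows "harm_mean a b \<le> lam s a b"
proof -
  define H where "H = harm_mean a b"
  have b: "0 < b" using a ab by simp
  have H0: "0 < H" using a b by (simp add: H_def harm_mean_def add_pos_pos)
  have "0 \<le> H powr (s+3) * tent_defect (-5) H a b"
    using tent_defect_harm_mean_base[OF a b] a b by (simp add: H_def)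
  also have "\<dots> \<le> tent_defect (s-2) H a b"
    using tent_defect_shift_nonneg[OF a ab H0, of "s+3" "-5"] s by simp
  finally show ?thesis using le_lam_iff_tent_defect[OF a ab] by (simp add: H_def)
qed

lemma lam_le_geom_mean_ordered:
  assumes a: "0 < a" and ab: "a < b" and s: "s \<le> -1"
  shows "lam s a b \<le> geom_mean a b"
proof -
  define G where "G = geom_mean a b"
  have b: "0 < b" using a ab by simp
  have G0: "0 < G" using a b by (simp add: G_def geom_mean_def)
  have "tent_defect (s-2) G a b \<le> G powr (s+1) * tent_defect (-3) G a b"
    using tent_defect_shift_nonpos[OF a ab G0, of "s+1" "-3"] s by simp
  also have "\<dots> \<le> 0"
    using tent_defect_geom_mean_base[OF a b] by (simp add: G_def mult_nonneg_nonpos)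
  finally show ?thesis using less_lam_iff_tent_defect[OF a ab, of G s] by (simp add: G_def)
qed

lemma harm_mean_le_lam:
  assumes s: "-3 \<le> s" and a: "0 < a" and b: "0 < b"
  shows "harm_mean a b \<le> lam s a b"
proof -
  consider "a < b" | "a = b" | "b < a" by linarith
  then show ?thesis
  proof cases
    case 1 then show ?thesis using harm_mean_le_lam_ordered a s by blast
  next
    case 2 then show ?thesis using a by (simp add: lam_def harm_mean_def)
  next
    case 3 then show ?thesis
      using harm_mean_le_lam_ordered[OF b 3 s] by (simp add: lam_sym[of s a b] harm_mean_def add.commute)
  qed
qed

lemma lam_le_geom_mean:
  assumes s: "s \<le> -1" and a: "0 < a" and b: "0 < b"
  shows "lam s a b \<le> geom_mean a b"
proof -
  consider "a < b" | "a = b" | "b < a" by linarith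
  then show ?thesis
  proof cases
    case 1 then show ?thesis using lam_le_geom_mean_ordered a s by blast
  next
    case 2 then show ?thesis using a by (simp add: lam_def geom_mean_def)
  next
    case 3 then show ?thesis
      using lam_le_geom_mean_ordered[OF b 3 s] by (simp add: lam_sym[of s a b] geom_mean_def mult.commute)
  qed
qed

section \<open>Sharpness\<close>

text \<open>For s < -3 the harmonic bound fails for a = 1 and large b: there lam s 1 b tends to
  (s-1)/(s+1) < 2 while harm_mean 1 b tends to 2.\<close>
lemma lam_lt_harm_mean_witness:
  assumes s: "s < -3"
  shows "\<exists>a b. 0 < a \<and> 0 < b \<and> lam s a b < harm_mean a b"
proof -
  define f where "f = (\<lambda>b::real. (s-1)/(s+1) * ((1 + b powr (s+1) - 2*((1+b)/2) powr (s+1)) /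
                                                 (1 + b powr s - 2*((1+b)/2) powr s)))"
  have mid: "filterlim (\<lambda>b::real. (1+b)/2) at_top at_top" by real_asymp
  have "(f \<longlongrightarrow> (s-1)/(s+1) * ((1 + 0 - 2*0)/(1 + 0 - 2*0))) at_top"
    unfolding f_def
    by (intro tendsto_intros tendsto_neg_powr filterlim_ident mid) (use s in auto)
  moreover have "((\<lambda>b. harm_mean 1 b) \<longlongrightarrow> 2) at_top" unfolding harm_mean_def by real_asymp
  ultimately have "((\<lambda>b. f b - harm_mean 1 b) \<longlongrightarrow> (s-1)/(s+1) - 2) at_top"
    by (intro tendsto_diff) simp_all
  moreover have "(s-1)/(s+1) - 2 < 0" using s by (simp add: neg_divide_less_eq)
  ultimately have "eventually (\<lambda>b. f b - harm_mean 1 b < 0 \<and> b > 1) at_top"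
    by (intro eventually_conj order_tendstoD eventually_gt_at_top)
  then obtain b where b: "b > 1" "f b - harm_mean 1 b < 0"
    by (auto simp: eventually_at_top_linorder)
  have "lam s 1 b = f b" using b s by (simp add: lam_def f_def)
  then show ?thesis using b by (intro exI[of _ 1] exI[of _ b]) auto
qed

text \<open>Mean value bound: on [1, 2] the derivative of x^\<sigma> is at least \<sigma>/2.\<close>
lemma powr_increment_lower_bound:
  fixes y z \<sigma> :: real
  assumes y: "1 \<le> y" and yz: "y < z" and z: "z \<le> 2" and \<sigma>: "0 < \<sigma>"
  shows "\<sigma>/2 * (z - y) \<le> z powr \<sigma> - y powr \<sigma>"
proof -
  have "\<exists>\<xi>. y < \<xi> \<and> \<xi> < z \<and> z powr \<sigma> - y powr \<sigma> = (z - y) * (\<sigma> * \<xi> powr (\<sigma> - 1))"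
  proof (rule MVT2[OF yz])
    fix x assume "y \<le> x" "x \<le> z"
    then have "0 < x" using y by simp
    then show "((\<lambda>x. x powr \<sigma>) has_real_derivative \<sigma> * x powr (\<sigma> - 1)) (at x)"
      by (rule has_real_derivative_powr)
  qed
  then obtain \<xi> where \<xi>: "y < \<xi>" "\<xi> < z" "z powr \<sigma> - y powr \<sigma> = (z - y) * (\<sigma> * \<xi> powr (\<sigma> - 1))"
    by blast
  have half: "1/2 \<le> \<xi> powr (\<sigma> - 1)"
  proof (cases "1 \<le> \<sigma>")
    case True
    then have "1 \<le> \<xi> powr (\<sigma> - 1)" using \<xi> y by (intro ge_one_powr_ge_zero) auto
    then show ?thesis by simp
  next
    case False
    have "(2::real) powr (-1) \<le> 2 powr (\<sigma> - 1)" using \<sigma> by (intro powr_mono) auto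
    also have "\<dots> \<le> \<xi> powr (\<sigma> - 1)" using False \<xi> y z by (intro powr_mono2') auto
    finally show ?thesis by (simp add: powr_minus)
  qed
  have "\<sigma> * (1/2) \<le> \<sigma> * \<xi> powr (\<sigma> - 1)"
    by (rule mult_left_mono[OF half]) (use \<sigma> in simp)
  then have "(z - y) * (\<sigma> * (1/2)) \<le> (z - y) * (\<sigma> * \<xi> powr (\<sigma> - 1))"
    by (rule mult_left_mono) (use yz in simp)
  then show ?thesis using \<xi> by (simp add: algebra_simps)
qed

lemma shifted_kernel_quadratic_bound:
  fixes t G \<sigma> :: real
  assumes t: "1 \<le> t" "t \<le> 2" and G: "1 \<le> G" "G \<le> 2" and \<sigma>: "0 < \<sigma>"
  shows "\<sigma>/16 * (t - G)^2 \<le> t powr (-3) * ((t - G) * (t powr \<sigma> - G powr \<sigma>))"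
proof -
  have sq: "\<sigma>/2 * (t - G)^2 \<le> (t - G) * (t powr \<sigma> - G powr \<sigma>)"
  proof -
    consider "G < t" | "t = G" | "t < G" by linarith
    then show ?thesis
    proof cases
      case 1
      then have "(t - G) * (\<sigma>/2 * (t - G)) \<le> (t - G) * (t powr \<sigma> - G powr \<sigma>)"
        using powr_increment_lower_bound[of G t \<sigma>] t G \<sigma> by (intro mult_left_mono) auto
      moreover have "\<sigma>/2 * (t - G)^2 = (t - G) * (\<sigma>/2 * (t - G))"
        by (simp add: power2_eq_square algebra_simps)
      ultimately show ?thesis by (simp only:)
    next
      case 3
      then have "(G - t) * (\<sigma>/2 * (G - t)) \<le> (G - t) * (G powr \<sigma> - t powr \<sigma>)"
        using powr_increment_lower_bound[of t G \<sigma>] t G \<sigma> by (intro mult_left_mono) auto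
      moreover have "\<sigma>/2 * (t - G)^2 = (G - t) * (\<sigma>/2 * (G - t))"
        by (simp add: power2_eq_square algebra_simps)
      moreover have "(t - G) * (t powr \<sigma> - G powr \<sigma>) = (G - t) * (G powr \<sigma> - t powr \<sigma>)"
        by (simp add: algebra_simps)
      ultimately show ?thesis by (simp only:)
    qed simp
  qed
  have "1/8 \<le> t powr (-3)"
  proof -
    have "t^3 \<le> 2^3" using t by (intro power_mono) auto
    then show ?thesis using t by (simp add: powr_neg_numeral field_simps)
  qed
  then have "\<sigma>/16 * (t - G)^2 \<le> t powr (-3) * (\<sigma>/2 * (t - G)^2)"
    using \<sigma> by (simp add: mult_right_mono[of "1/8" "t powr (-3)" "\<sigma>/2 * (t - G)^2", simplified])
  also have "\<dots> \<le> t powr (-3) * ((t - G) * (t powr \<sigma> - G powr \<sigma>))"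
    by (rule mult_left_mono[OF sq]) simp
  finally show ?thesis .
qed

text \<open>For s > -1 the geometric bound fails for a = 1 and b close to 1: the gain \<sigma>/16 \<integral> (t - G)^2 w
  from the quantitative kernel bound is of order (b - 1)^4, while the defect E of the case
  s = -1 is of smaller order, E / P \<rightarrow> 0.\<close>
lemma lam_gt_geom_mean_witness:
  assumes s: "-1 < s"
  shows "\<exists>a b. 0 < a \<and> 0 < b \<and> geom_mean a b < lam s a b"
proof -
  define \<sigma> where "\<sigma> = s + 1"
  have \<sigma>: "0 < \<sigma>" using s by (simp add: \<sigma>_def)
  define k where "k = \<sigma> / (16 * 2 powr \<sigma>)"
  have k0: "0 < k" using \<sigma> by (simp add: k_def)
  define E where "E = (\<lambda>x::real. sqrt x * (1/2 + 1/(2*x) - 2/(1+x)) - (2 * ln((1+x)/2) - ln x))"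
  define P where "P = (\<lambda>x::real. ((1 - sqrt x)^4 + (x - sqrt x)^4 - 2*((1+x)/2 - sqrt x)^4)/12)"
  have "((\<lambda>x. E x / P x) \<longlongrightarrow> 0) (at_right 1)" unfolding E_def P_def by real_asymp
  then have "eventually (\<lambda>x. E x / P x < k) (at_right 1)" using k0 by (rule order_tendstoD(2))
  moreover have "eventually (\<lambda>x. P x > 0) (at_right 1)" unfolding P_def by real_asymp
  moreover have "eventually (\<lambda>x. x \<in> {1<..<2}) (at_right (1::real))"
    by (rule eventually_at_right_real) simp
  ultimately have "eventually (\<lambda>x. E x / P x < k \<and> P x > 0 \<and> x \<in> {1<..<2}) (at_right 1)"
    by (intro eventually_conj)
  then obtain x where x: "E x / P x < k" "P x > 0" "1 < x" "x < 2"
    using eventually_happens[of _ "at_right (1::real)"] by (auto simp: trivial_limit_def[symmetric])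
  define G where "G = sqrt x"
  have G: "1 < G" "G < 2" using x real_sqrt_less_mono[of x 4] by (auto simp: G_def)
  have one: "(0::real) < 1" "1 < x" using x by auto
  have gm: "geom_mean 1 x = G" by (simp add: geom_mean_def G_def)
  have E_defect: "tent_defect (-3) G 1 x = - E x"
  proof -
    have "tent_moment (-2) 1 x = 2 * ln ((1+x)/2) - ln x" by (simp add: tent_moment_def)
    moreover have "tent_moment (-3) 1 x = 1/2 + 1/(2*x) - 2/(1+x)"
      using x by (simp add: tent_moment_def powr_minus field_simps)
    ultimately show ?thesis by (simp add: tent_defect_def E_def G_def)
  qed
  have "((\<lambda>t. (t-G)^2 * min (t-1) (x-t)) has_integral P x) {1..x}"
  proof -
    have "((\<lambda>t. (t-G)^2 * min (t-1) (x-t)) has_integral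
           ((1-G)^4/12 + (x-G)^4/12 - 2*(((1+x)/2-G)^4/12))) {1..x}"
      by (rule has_integral_tent_second_difference[OF one(2),
            where f="\<lambda>t. (t-G)^4/12" and g="\<lambda>t. (t-G)^3/3"])
         (auto intro!: derivative_eq_intros simp: field_simps eval_nat_numeral)
    then show ?thesis by (simp add: P_def G_def diff_divide_distrib add_divide_distrib)
  qed
  from has_integral_mult_right[OF this, of "\<sigma>/16"]
  have "((\<lambda>t. \<sigma>/16 * (t-G)^2 * min (t-1) (x-t)) has_integral \<sigma>/16 * P x) {1..x}"
    by (simp add: mult.assoc)
  then have "\<sigma>/16 * P x \<le> tent_defect (\<sigma> + -3) G 1 x - G powr \<sigma> * tent_defect (-3) G 1 x"
  proof (rule tent_integral_le[OF _ has_integral_tent_defect_shift[OF one]])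
    fix t assume "1 \<le> t" "t \<le> x"
    then show "\<sigma>/16 * (t-G)^2 \<le> t powr (-3) * ((t - G) * (t powr \<sigma> - G powr \<sigma>))"
      using shifted_kernel_quadratic_bound[of t G \<sigma>] x G \<sigma> by auto
  qed
  then have main: "\<sigma>/16 * P x - G powr \<sigma> * E x \<le> tent_defect (s-2) G 1 x"
    using E_defect by (simp add: \<sigma>_def)
  have "0 \<le> E x" using tent_defect_geom_mean_base[of 1 x] E_defect gm x by simp
  then have "G powr \<sigma> * E x \<le> 2 powr \<sigma> * E x"
    using G \<sigma> by (intro mult_right_mono powr_mono2) auto
  also have "\<dots> < 2 powr \<sigma> * (k * P x)"
    using x by (intro mult_strict_left_mono) (simp_all add: pos_divide_less_eq)
  also have "\<dots> = \<sigma>/16 * P x" by (simp add: k_def)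
  finally have "0 < tent_defect (s-2) G 1 x" using main by simp
  then have "geom_mean 1 x < lam s 1 x" using less_lam_iff_tent_defect[OF one] gm by simp
  then show ?thesis using x by (intro exI[of _ 1] exI[of _ x]) auto
qed

theorem theorem3:
  shows "(\<forall>s::real. -3 \<le> s \<and> s \<le> -1 \<longrightarrow>
            (\<forall>a b::real. 0 < a \<and> 0 < b \<longrightarrow>
               harm_mean a b \<le> lam s a b \<and> lam s a b \<le> geom_mean a b))
       \<and> (\<forall>s::real. (\<forall>a b::real. 0 < a \<and> 0 < b \<longrightarrow> harm_mean a b \<le> lam s a b) \<longleftrightarrow> -3 \<le> s)
       \<and> (\<forall>s::real. (\<forall>a b::real. 0 < a \<and> 0 < b \<longrightarrow> lam s a b \<le> geom_mean a b) \<longleftrightarrow> s \<le> -1)"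
proof -
  have harm: "(\<forall>a b::real. 0 < a \<and> 0 < b \<longrightarrow> harm_mean a b \<le> lam s a b) \<longleftrightarrow> -3 \<le> s" for s
    using harm_mean_le_lam lam_lt_harm_mean_witness[of s] by (meson not_le)
  have geom: "(\<forall>a b::real. 0 < a \<and> 0 < b \<longrightarrow> lam s a b \<le> geom_mean a b) \<longleftrightarrow> s \<le> -1" for s
    using lam_le_geom_mean lam_gt_geom_mean_witness[of s] by (meson not_le)
  show ?thesis using harm geom by blast
qed

end
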